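(* Let $(M,J,g)$ be an $n$-dimensional metallic pseudo-Riemannian manifold with $J^2=pJ+qI$, and let $\{E_i\}_{1\le i\le n}$ be a local $g$-orthonormal frame. Then for every vector field $X$ on $M$, $$\sum_{i=1}^{n}g((dJ)(X,E_i),JE_i)=\frac{1}{2}p\sum_{i=1}^{n}g((\nabla_X J)E_i,E_i)+p\,g(X,\delta J)-g(JX,\delta J).$$
   Context: A metallic pseudo-Riemannian manifold $(M,J,g)$ is a manifold with a pseudo-Riemannian metric $g$ and a $g$-symmetric $(1,1)$-tensor field $J$ with $J^2=pJ+qI$ for real $p,q$. $\nabla$ is the Levi-Civita connection of $g$, $(dJ)(X,Y)=(\nabla_XJ)Y-(\nabla_YJ)X$, and $\delta J=-\sum_{i=1}^n(\nabla_{E_i}J)E_i$ (computed with the same frame). *)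

theory Defs
  imports "HOL-Analysis.Analysis"
begin

text \<open>Local coordinate model: a chart domain U (open subset of real^'n), a metric
  given by its component matrix g x, the (1,1)-tensor J given by its matrix J x,
  vector fields as maps real^'n => real^'n.\<close>

definition gval :: "(real^'n \<Rightarrow> real^'n^'n) \<Rightarrow> real^'n \<Rightarrow> real^'n \<Rightarrow> real^'n \<Rightarrow> real" where
  "gval g x u v = u \<bullet> (g x *v v)"

definition dmetric :: "(real^'n \<Rightarrow> real^'n^'n) \<Rightarrow> real^'n \<Rightarrow> real^'n \<Rightarrow> real^'n \<Rightarrow> real^'n \<Rightarrow> real" where
  "dmetric g x u v w = v \<bullet> ((frechet_derivative g (at x) u) *v w)"

definition christoffel_low :: "(real^'n \<Rightarrow> real^'n^'n) \<Rightarrow> real^'n \<Rightarrow> real^'n \<Rightarrow> real^'n \<Rightarrow> real^'n \<Rightarrow> real" where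
  "christoffel_low g x u v w =
     (1/2) * (dmetric g x u v w + dmetric g x v u w - dmetric g x w u v)"

definition christoffel :: "(real^'n \<Rightarrow> real^'n^'n) \<Rightarrow> real^'n \<Rightarrow> real^'n \<Rightarrow> real^'n \<Rightarrow> real^'n" where
  "christoffel g x u v = matrix_inv (g x) *v (\<chi> l. christoffel_low g x u v (axis l 1))"

definition lc_nabla :: "(real^'n \<Rightarrow> real^'n^'n) \<Rightarrow> (real^'n \<Rightarrow> real^'n) \<Rightarrow> (real^'n \<Rightarrow> real^'n) \<Rightarrow> real^'n \<Rightarrow> real^'n" where
  "lc_nabla g X Y x = frechet_derivative Y (at x) (X x) + christoffel g x (X x) (Y x)"

definition nablaJ :: "(real^'n \<Rightarrow> real^'n^'n) \<Rightarrow> (real^'n \<Rightarrow> real^'n^'n) \<Rightarrow> (real^'n \<Rightarrow> real^'n) \<Rightarrow> (real^'n \<Rightarrow> real^'n) \<Rightarrow> real^'n \<Rightarrow> real^'n" where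
  "nablaJ g J X Y x = lc_nabla g X (\<lambda>y. J y *v Y y) x - J x *v lc_nabla g X Y x"

definition dJ :: "(real^'n \<Rightarrow> real^'n^'n) \<Rightarrow> (real^'n \<Rightarrow> real^'n^'n) \<Rightarrow> (real^'n \<Rightarrow> real^'n) \<Rightarrow> (real^'n \<Rightarrow> real^'n) \<Rightarrow> real^'n \<Rightarrow> real^'n" where
  "dJ g J X Y x = nablaJ g J X Y x - nablaJ g J Y X x"

definition deltaJ :: "(real^'n \<Rightarrow> real^'n^'n) \<Rightarrow> (real^'n \<Rightarrow> real^'n^'n) \<Rightarrow> ('n \<Rightarrow> real^'n \<Rightarrow> real^'n) \<Rightarrow> real^'n \<Rightarrow> real^'n" where
  "deltaJ g J E x = - (\<Sum>i\<in>UNIV. nablaJ g J (E i) (E i) x)"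

end

theory Submission
  imports Defs
begin

(* At a point x, nabla J is the tensor A v w = (D_v J) w + Gamma(v, J w) - J Gamma(v, w).
   Differentiating J^2 = pJ + q gives A_v J + J A_v = p A_v, and differentiating the
   g-symmetry of J, combined with the Koszul formula for Gamma, shows that every A_v is
   g-symmetric. For such an operator g(A_v e, J e) = p/2 g(A_v e, e) and
   g(A_e X, J e) = g(X, A_e (J e)) = p g(X, A_e e) - g(JX, A_e e); summing over the frame
   gives the identity. *)

lemma bounded_bilinear_matrix_vector_mult:
  "bounded_bilinear (\<lambda>(A::real^'n^'m) (v::real^'n). A *v v)"
  unfolding bilinear_conv_bounded_bilinear[symmetric] bilinear_def
  by (auto intro!: linearI simp: algebra_simps scaleR_matrix_vector_assoc)

lemmas has_derivative_matrix_vector_mult [derivative_intros] =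
  bounded_bilinear.FDERIV[OF bounded_bilinear_matrix_vector_mult]

lemma has_derivative_unique_on_open:
  assumes "(f has_derivative f') (at x)" "(h has_derivative h') (at x)"
    and "open U" "x \<in> U" "\<And>y. y \<in> U \<Longrightarrow> f y = h y"
  shows "f' = h'"
proof -
  have "(h has_derivative f') (at x)"
    using has_derivative_transform_within_open[OF assms(1) assms(3,4)] assms(5) by simp
  then show ?thesis using assms(2) by (rule has_derivative_unique)
qed

lemma symmetric_matrix_inner_commute:
  fixes G :: "real^'n^'n"
  assumes "transpose G = G"
  shows "a \<bullet> (G *v b) = b \<bullet> (G *v a)"
proof -
  have "a \<bullet> (G *v b) = (transpose G *v a) \<bullet> b" by (simp add: dot_lmul_matrix)
  then show ?thesis using assms by (simp add: inner_commute)
qed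

lemma matrix_inv_right:
  fixes A :: "real^'n^'n"
  assumes "invertible A"
  shows "A ** matrix_inv A = mat 1"
  using assms unfolding invertible_def matrix_inv_def by (rule someI_ex[THEN conjunct1])

lemma matrix_vector_mult_metallic:
  fixes J :: "real^'n^'n"
  assumes "J ** J = p *\<^sub>R J + q *\<^sub>R mat 1"
  shows "J *v (J *v u) = p *\<^sub>R (J *v u) + q *\<^sub>R u"
  using assms by (simp add: matrix_vector_mul_assoc matrix_vector_mult_add_rdistrib
      scaleR_matrix_vector_assoc[symmetric])

lemma bilinear_gval: "bilinear (gval g x)"
  unfolding bilinear_def gval_def
  by (auto intro!: linearI simp: inner_add_right matrix_vector_right_distrib
      matrix_vector_mult_scaleR algebra_simps)

lemmas gval_add_left = bilinear_ladd[OF bilinear_gval]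
lemmas gval_diff_left = bilinear_lsub[OF bilinear_gval]
lemmas gval_diff_right = bilinear_rsub[OF bilinear_gval]
lemmas gval_scaleR_left = bilinear_lmul[OF bilinear_gval]
lemmas gval_scaleR_right = bilinear_rmul[OF bilinear_gval]
lemmas gval_neg_right = bilinear_rneg[OF bilinear_gval]

lemma gval_sum_right: "gval g x u (\<Sum>i\<in>S. f i) = (\<Sum>i\<in>S. gval g x u (f i))"
  using bilinear_gval unfolding bilinear_def by (blast intro: linear_sum)

lemma gval_sym: "transpose (g x) = g x \<Longrightarrow> gval g x a b = gval g x b a"
  unfolding gval_def by (rule symmetric_matrix_inner_commute)

lemma gval_J_symmetric_anticommuting_diag:
  assumes g_sym: "transpose (g x) = g x"
    and J_gsym: "\<And>u v. gval g x (J *v u) v = gval g x u (J *v v)"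
    and A_gsym: "\<And>u v. gval g x (A u) v = gval g x u (A v)"
    and A_anticomm: "\<And>u. A (J *v u) + J *v A u = p *\<^sub>R A u"
  shows "gval g x (A e) (J *v e) = p / 2 * gval g x (A e) e"
proof -
  have "2 * gval g x (A e) (J *v e) = gval g x (A (J *v e)) e + gval g x (J *v A e) e"
    using A_gsym[of e "J *v e"] J_gsym[of "A e" e] gval_sym[of g x, OF g_sym] by simp
  also have "\<dots> = p * gval g x (A e) e"
    using A_anticomm[of e] by (metis gval_add_left gval_scaleR_left real_scaleR_def)
  finally show ?thesis by simp
qed

lemma gval_J_symmetric_anticommuting:
  assumes J_gsym: "\<And>u v. gval g x (J *v u) v = gval g x u (J *v v)"
    and A_gsym: "\<And>u v. gval g x (A u) v = gval g x u (A v)"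
    and A_anticomm: "\<And>u. A (J *v u) + J *v A u = p *\<^sub>R A u"
  shows "gval g x (A u) (J *v e) = p * gval g x u (A e) - gval g x (J *v u) (A e)"
proof -
  have "gval g x (A u) (J *v e) = gval g x u (p *\<^sub>R A e - J *v A e)"
  proof -
    have "A (J *v e) = p *\<^sub>R A e - J *v A e"
      using A_anticomm[of e] by (simp add: algebra_simps)
    then show ?thesis using A_gsym by simp
  qed
  also have "\<dots> = p * gval g x u (A e) - gval g x (J *v u) (A e)"
    using J_gsym by (simp add: gval_diff_right gval_scaleR_right)
  finally show ?thesis .
qed

(* The derivative of w in nabla_v (J w) - J (nabla_v w) cancels, so nabla J is a tensor. *)
definition nablaJ_tensor ::
    "(real^'n \<Rightarrow> real^'n^'n) \<Rightarrow> (real^'n \<Rightarrow> real^'n^'n) \<Rightarrow> real^'n \<Rightarrow> real^'n \<Rightarrow> real^'n \<Rightarrow> real^'n" where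
  "nablaJ_tensor g J x v w =
     frechet_derivative J (at x) v *v w + christoffel g x v (J x *v w) - J x *v christoffel g x v w"

lemma nablaJ_eq_nablaJ_tensor:
  assumes "J differentiable at x" "Y differentiable at x"
  shows "nablaJ g J Z Y x = nablaJ_tensor g J x (Z x) (Y x)"
proof -
  have "((\<lambda>y. J y *v Y y) has_derivative
      (\<lambda>h. J x *v frechet_derivative Y (at x) h + frechet_derivative J (at x) h *v Y x)) (at x)"
    using assms by (auto intro!: derivative_eq_intros simp: frechet_derivative_works)
  then have "frechet_derivative (\<lambda>y. J y *v Y y) (at x) =
      (\<lambda>h. J x *v frechet_derivative Y (at x) h + frechet_derivative J (at x) h *v Y x)"
    by (rule frechet_derivative_at[symmetric])
  then show ?thesis
    unfolding nablaJ_def lc_nabla_def nablaJ_tensor_def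
    by (simp add: algebra_simps matrix_vector_right_distrib)
qed

locale metallic_chart =
  fixes U :: "(real^'n) set"
    and g J :: "real^'n \<Rightarrow> real^'n^'n"
    and p q :: real
  assumes U_open: "open U"
    and g_sym: "\<forall>x\<in>U. transpose (g x) = g x"
    and g_nondeg: "\<forall>x\<in>U. invertible (g x)"
    and g_diff: "g differentiable_on U"
    and J_diff: "J differentiable_on U"
    and J_metallic: "\<forall>x\<in>U. J x ** J x = p *\<^sub>R J x + q *\<^sub>R mat 1"
    and J_gsym: "\<forall>x\<in>U. \<forall>u v. gval g x (J x *v u) v = gval g x u (J x *v v)"
begin

lemma differentiable_at_of_on: "f differentiable_on U \<Longrightarrow> x \<in> U \<Longrightarrow> f differentiable at x"
  using U_open differentiable_on_eq_differentiable_at by blast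

lemma metric_has_derivative: "x \<in> U \<Longrightarrow> (g has_derivative frechet_derivative g (at x)) (at x)"
  using differentiable_at_of_on[OF g_diff] frechet_derivative_works by blast

lemma structure_has_derivative: "x \<in> U \<Longrightarrow> (J has_derivative frechet_derivative J (at x)) (at x)"
  using differentiable_at_of_on[OF J_diff] frechet_derivative_works by blast

lemma dmetric_sym:
  assumes "x \<in> U"
  shows "dmetric g x v a b = dmetric g x v b a"
proof -
  have "(\<lambda>h. a \<bullet> (frechet_derivative g (at x) h *v b)) = (\<lambda>h. b \<bullet> (frechet_derivative g (at x) h *v a))"
  proof (rule has_derivative_unique_on_open[OF _ _ U_open assms])
    show "\<And>y. y \<in> U \<Longrightarrow> a \<bullet> (g y *v b) = b \<bullet> (g y *v a)"
      using g_sym symmetric_matrix_inner_commute by blast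
  qed (use metric_has_derivative[OF assms] in \<open>auto intro!: derivative_eq_intros\<close>)
  then show ?thesis unfolding dmetric_def by metis
qed

lemma structure_derivative_anticomm:
  assumes "x \<in> U"
  shows "frechet_derivative J (at x) v *v (J x *v u) + J x *v (frechet_derivative J (at x) v *v u)
    = p *\<^sub>R (frechet_derivative J (at x) v *v u)"
proof -
  let ?J' = "frechet_derivative J (at x)"
  have "(\<lambda>h. ?J' h *v (J x *v u) + J x *v (?J' h *v u)) = (\<lambda>h. p *\<^sub>R (?J' h *v u))"
  proof (rule has_derivative_unique_on_open[OF _ _ U_open assms])
    show "\<And>y. y \<in> U \<Longrightarrow> J y *v (J y *v u) = p *\<^sub>R (J y *v u) + q *\<^sub>R u"
      using J_metallic matrix_vector_mult_metallic by blast
    have J': "(J has_derivative ?J') (at x)"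
      using structure_has_derivative[OF assms] .
    show "((\<lambda>y. J y *v (J y *v u)) has_derivative (\<lambda>h. ?J' h *v (J x *v u) + J x *v (?J' h *v u))) (at x)"
      by (rule derivative_eq_intros J' refl)+ (simp add: add.commute)
    show "((\<lambda>y. p *\<^sub>R (J y *v u) + q *\<^sub>R u) has_derivative (\<lambda>h. p *\<^sub>R (?J' h *v u))) (at x)"
      by (rule derivative_eq_intros J' refl)+ simp
  qed
  then show ?thesis by metis
qed

lemma structure_derivative_gsym:
  assumes "x \<in> U"
  shows "gval g x (frechet_derivative J (at x) v *v u) w - gval g x u (frechet_derivative J (at x) v *v w)
    = dmetric g x v u (J x *v w) - dmetric g x v (J x *v u) w"
proof -
  let ?J' = "frechet_derivative J (at x)" and ?g' = "frechet_derivative g (at x)"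
  have J': "(J has_derivative ?J') (at x)" and g': "(g has_derivative ?g') (at x)"
    using structure_has_derivative metric_has_derivative assms by blast+
  have "(\<lambda>h. (J x *v u) \<bullet> (?g' h *v w) + (?J' h *v u) \<bullet> (g x *v w))
      = (\<lambda>h. u \<bullet> (g x *v (?J' h *v w)) + u \<bullet> (?g' h *v (J x *v w)))"
  proof (rule has_derivative_unique_on_open[OF _ _ U_open assms])
    show "\<And>y. y \<in> U \<Longrightarrow> (J y *v u) \<bullet> (g y *v w) = u \<bullet> (g y *v (J y *v w))"
      using J_gsym unfolding gval_def by blast
    show "((\<lambda>y. (J y *v u) \<bullet> (g y *v w)) has_derivative
        (\<lambda>h. (J x *v u) \<bullet> (?g' h *v w) + (?J' h *v u) \<bullet> (g x *v w))) (at x)"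
      by (rule derivative_eq_intros J' g' refl)+ simp
    show "((\<lambda>y. u \<bullet> (g y *v (J y *v w))) has_derivative
        (\<lambda>h. u \<bullet> (g x *v (?J' h *v w)) + u \<bullet> (?g' h *v (J x *v w)))) (at x)"
      by (rule derivative_eq_intros J' g' refl)+ (simp add: inner_add_right)
  qed
  from fun_cong[OF this, of v] show ?thesis
    unfolding gval_def dmetric_def by linarith
qed

lemma bilinear_christoffel_low:
  assumes "x \<in> U"
  shows "bilinear (christoffel_low g x v)"
proof -
  have L: "linear (frechet_derivative g (at x))"
    using metric_has_derivative[OF assms] has_derivative_linear by blast
  show ?thesis
    unfolding bilinear_def christoffel_low_def dmetric_def
    by (auto intro!: linearI simp: linear_add[OF L] linear_scale[OF L] field_simps
        inner_add_left inner_add_right matrix_vector_right_distrib matrix_vector_mult_add_rdistrib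
        matrix_vector_mult_scaleR scaleR_matrix_vector_assoc[symmetric])
qed

lemma linear_christoffel:
  assumes "x \<in> U"
  shows "linear (christoffel g x v)"
proof -
  have "linear (\<lambda>u. \<chi> l. christoffel_low g x v u (axis l 1))"
    using bilinear_christoffel_low[OF assms]
    by (intro linearI) (simp_all add: vec_eq_iff bilinear_ladd bilinear_lmul)
  from linear_compose[OF this matrix_vector_mul_linear[of "matrix_inv (g x)"]]
  show ?thesis unfolding christoffel_def by (simp add: o_def)
qed

lemma gval_christoffel:
  assumes "x \<in> U"
  shows "gval g x (christoffel g x v u) w = christoffel_low g x v u w"
proof -
  have lin: "linear (christoffel_low g x v u)"
    using bilinear_christoffel_low[OF assms] unfolding bilinear_def by blast
  have "gval g x (christoffel g x v u) w = w \<bullet> (\<chi> l. christoffel_low g x v u (axis l 1))"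
    using g_sym g_nondeg assms unfolding gval_def christoffel_def
    by (simp add: symmetric_matrix_inner_commute matrix_vector_mul_assoc matrix_inv_right)
  also have "\<dots> = christoffel_low g x v u (\<Sum>l\<in>UNIV. w $ l *\<^sub>R axis l 1)"
    by (simp add: inner_vec_def linear_sum[OF lin] linear_scale[OF lin] mult.commute)
  also have "\<dots> = christoffel_low g x v u w"
    using basis_expansion[of w] by (simp add: scalar_mult_eq_scaleR)
  finally show ?thesis .
qed

lemma christoffel_low_add_swap:
  assumes "x \<in> U"
  shows "christoffel_low g x v a b + christoffel_low g x v b a = dmetric g x v a b"
  unfolding christoffel_low_def using dmetric_sym[OF assms] by (simp add: algebra_simps)

lemma nablaJ_tensor_anticomm:
  assumes "x \<in> U"
  shows "nablaJ_tensor g J x v (J x *v u) + J x *v nablaJ_tensor g J x v u = p *\<^sub>R nablaJ_tensor g J x v u"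
proof -
  let ?J' = "frechet_derivative J (at x)" and ?\<Gamma> = "christoffel g x v"
  have JJ: "\<And>z. J x *v (J x *v z) = p *\<^sub>R (J x *v z) + q *\<^sub>R z"
    using J_metallic assms matrix_vector_mult_metallic by blast
  have \<Gamma>JJ: "?\<Gamma> (J x *v (J x *v u)) = p *\<^sub>R ?\<Gamma> (J x *v u) + q *\<^sub>R ?\<Gamma> u"
    using linear_christoffel[OF assms] by (simp only: JJ linear_add linear_scale)
  have "nablaJ_tensor g J x v (J x *v u) + J x *v nablaJ_tensor g J x v u
      = (?J' v *v (J x *v u) + J x *v (?J' v *v u)) + ?\<Gamma> (J x *v (J x *v u)) - J x *v (J x *v ?\<Gamma> u)"
    unfolding nablaJ_tensor_def
    by (simp add: algebra_simps matrix_vector_right_distrib matrix_vector_mult_diff_distrib)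
  also have "\<dots> = p *\<^sub>R nablaJ_tensor g J x v u"
    unfolding structure_derivative_anticomm[OF assms] \<Gamma>JJ JJ[of "?\<Gamma> u"] nablaJ_tensor_def
    by (simp add: algebra_simps)
  finally show ?thesis .
qed

lemma nablaJ_tensor_gsym:
  assumes "x \<in> U"
  shows "gval g x (nablaJ_tensor g J x v u) w = gval g x u (nablaJ_tensor g J x v w)"
proof -
  let ?J' = "frechet_derivative J (at x)"
  have expand: "gval g x (nablaJ_tensor g J x v a) b = gval g x (?J' v *v a) b
      + christoffel_low g x v (J x *v a) b - christoffel_low g x v a (J x *v b)" for a b
    using J_gsym assms
    by (simp add: nablaJ_tensor_def gval_add_left gval_diff_left gval_christoffel)
  have "gval g x u (nablaJ_tensor g J x v w) = gval g x (nablaJ_tensor g J x v w) u"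
    using g_sym assms gval_sym by blast
  moreover have "gval g x u (?J' v *v w) = gval g x (?J' v *v w) u"
    using g_sym assms gval_sym by blast
  ultimately show ?thesis
    using expand[of u w] expand[of w u] structure_derivative_gsym[OF assms, of v u w]
      christoffel_low_add_swap[OF assms, of v "J x *v u" w]
      christoffel_low_add_swap[OF assms, of v u "J x *v w"]
    by linarith
qed

end

theorem mainTheorem5:
  fixes U :: "(real^'n) set"
    and g J :: "real^'n \<Rightarrow> real^'n^'n"
    and p q :: real
    and E :: "'n \<Rightarrow> real^'n \<Rightarrow> real^'n"
    and X :: "real^'n \<Rightarrow> real^'n"
  assumes U_open: "open U"
    and g_sym: "\<forall>x\<in>U. transpose (g x) = g x"
    and g_nondeg: "\<forall>x\<in>U. invertible (g x)"
    and g_diff: "g differentiable_on U"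
    and J_diff: "J differentiable_on U"
    and J_metallic: "\<forall>x\<in>U. J x ** J x = p *\<^sub>R J x + q *\<^sub>R mat 1"
    and J_gsym: "\<forall>x\<in>U. \<forall>u v. gval g x (J x *v u) v = gval g x u (J x *v v)"
    and E_diff: "\<forall>i. E i differentiable_on U"
    and E_orth: "\<forall>x\<in>U. \<forall>i j. i \<noteq> j \<longrightarrow> gval g x (E i x) (E j x) = 0"
    and E_norm: "\<forall>x\<in>U. \<forall>i. \<bar>gval g x (E i x) (E i x)\<bar> = 1"
    and X_diff: "X differentiable_on U"
  shows "\<forall>x\<in>U.
    (\<Sum>i\<in>UNIV. gval g x (dJ g J X (E i) x) (J x *v E i x))
      = 1/2 * p * (\<Sum>i\<in>UNIV. gval g x (nablaJ g J X (E i) x) (E i x))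
        + p * gval g x (X x) (deltaJ g J E x)
        - gval g x (J x *v X x) (deltaJ g J E x)"
proof
  interpret metallic_chart U g J p q
    using U_open g_sym g_nondeg g_diff J_diff J_metallic J_gsym by unfold_locales
  fix x assume x: "x \<in> U"
  let ?A = "nablaJ_tensor g J x"
  have nabla: "nablaJ g J Z Y x = ?A (Z x) (Y x)" if "Y differentiable_on U" for Y Z
    by (simp add: nablaJ_eq_nablaJ_tensor differentiable_at_of_on J_diff that x)
  have A_gsym: "gval g x (?A v u) w = gval g x u (?A v w)" for v u w
    using nablaJ_tensor_gsym[OF x] .
  have A_anticomm: "?A v (J x *v u) + J x *v ?A v u = p *\<^sub>R ?A v u" for v u
    using nablaJ_tensor_anticomm[OF x] .
  have self: "gval g x (?A (X x) e) (J x *v e) = p / 2 * gval g x (?A (X x) e) e" for e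
    using g_sym J_gsym x A_gsym A_anticomm by (blast intro: gval_J_symmetric_anticommuting_diag)
  have cross: "gval g x (?A e (X x)) (J x *v e) = p * gval g x (X x) (?A e e) - gval g x (J x *v X x) (?A e e)" for e
    using J_gsym x A_gsym A_anticomm by (blast intro: gval_J_symmetric_anticommuting)
  have delta: "deltaJ g J E x = - (\<Sum>i\<in>UNIV. ?A (E i x) (E i x))"
    unfolding deltaJ_def using nabla E_diff by simp
  show "(\<Sum>i\<in>UNIV. gval g x (dJ g J X (E i) x) (J x *v E i x))
      = 1/2 * p * (\<Sum>i\<in>UNIV. gval g x (nablaJ g J X (E i) x) (E i x))
        + p * gval g x (X x) (deltaJ g J E x)
        - gval g x (J x *v X x) (deltaJ g J E x)"
    unfolding dJ_def nabla[OF E_diff[rule_format]] nabla[OF X_diff] delta gval_diff_left self cross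
      gval_neg_right gval_sum_right
    by (simp add: sum_subtractf sum.distrib sum_distrib_left algebra_simps)
qed

end
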